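(* Let $n\geq1$. If $\beta\in B_{2n}$ and the underlying permutation of $\beta$ consists of a single cycle (of length $2n$), then $\beta$ does not have positive Burau eigenvalues, i.e. it is not the case that all eigenvalues of $\rho(\beta)$ lie in $\mathbb{E}$ and are positive.
   Context: $B_N$ is the braid group generated by $\sigma_1,\dots,\sigma_{N-1}$, with underlying permutation homomorphism $B_N\to S_N$, $\sigma_i\mapsto(i\ i{+}1)$. The reduced Burau representation $\rho:B_N\to\mathrm{GL}_{N-1}(\mathbb{Z}[t^{\pm1}])$ is the homomorphism given for $N\ge3$ by $\rho(\sigma_1)=\begin{pmatrix}-t&0&0\\1&1&0\\0&0&I_{N-3}\end{pmatrix}$, $\rho(\sigma_{N-1})=\begin{pmatrix}I_{N-3}&0&0\\0&1&t\\0&0&-t\end{pmatrix}$, $\rho(\sigma_i)=\begin{pmatrix}I_{i-2}&0&0&0&0\\0&1&t&0&0\\0&0&-t&0&0\\0&0&1&1&0\\0&0&0&0&I_{N-i-2}\end{pmatrix}$ for $2\le i\le N-2$, and for $N=2$ by $\rho(\sigma_1)=(-t)$. $\mathbb{E}=\bigcup_{k\ge1}\mathbb{R}((t^{1/k}))$ is the field of Puiseux series over $\mathbb{R}$, with the ordering whose positive elements are the nonzero series whose lowest-exponent nonzero coefficient is positive. *)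

theory Defs
  imports "HOL-Computational_Algebra.Formal_Laurent_Series"
          "HOL-Combinatorics.Transposition" "HOL-Combinatorics.Orbits"
          "Jordan_Normal_Form.Char_Poly"
begin

text \<open>Braid words in B_N: a list of letters (i, s) with 1 \<le> i \<le> N-1, standing for
  sigma_i if s = True and sigma_i^(-1) if s = False.  Every braid is represented by a word,
  and both the Burau representation and the permutation map are homomorphisms, so they are
  computed on words.\<close>

definition braid_word :: "nat \<Rightarrow> (nat \<times> bool) list \<Rightarrow> bool" where
  "braid_word N w \<longleftrightarrow> (\<forall>(i, s) \<in> set w. 1 \<le> i \<and> i < N)"

definition braid_perm :: "(nat \<times> bool) list \<Rightarrow> nat \<Rightarrow> nat" where
  "braid_perm w = foldr (\<lambda>(i, s) f. transpose i (i + 1) \<circ> f) w id"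

text \<open>Reduced Burau matrix of sigma_i^(+-1) in B_N (size N-1), with the variable t
  specialised to an element T of a field.  With 1-indexed rows/columns, rho(sigma_i)
  agrees with the identity except in column i, whose entries are t in row i-1, -t in row i,
  and 1 in row i+1 (where these rows exist); this is exactly the matrix in the paper.\<close>

definition burau_gen :: "'a::field \<Rightarrow> nat \<Rightarrow> nat \<Rightarrow> bool \<Rightarrow> 'a mat" where
  "burau_gen T N i s = mat (N - 1) (N - 1) (\<lambda>(r, c).
     if c + 1 = i then
       (if r + 2 = i then (if s then T else 1)
        else if r + 1 = i then (if s then - T else - inverse T)
        else if r = i then (if s then 1 else inverse T)
        else 0)
     else (if r = c then 1 else 0))"

definition burau_word :: "'a::field \<Rightarrow> nat \<Rightarrow> (nat \<times> bool) list \<Rightarrow> 'a mat" where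
  "burau_word T N w = foldr (\<lambda>(i, s) M. burau_gen T N i s * M) w (1\<^sub>m (N - 1))"

definition fls_pos :: "real fls \<Rightarrow> bool" where
  "fls_pos f \<longleftrightarrow> f \<noteq> 0 \<and> fls_nth f (fls_subdegree f) > 0"

text \<open>Positive Burau eigenvalues: all eigenvalues of rho(beta) lie in the Puiseux field
  E = union of R((t^(1/k))) and are positive.  Since finitely many eigenvalues are involved
  and the union is directed, this means: for some k \<ge> 1 the characteristic polynomial of
  rho(beta), viewed over R((s)) with s = t^(1/k) (so t = s^k), splits into linear factors
  with positive roots.\<close>

definition positive_burau_eigenvalues :: "nat \<Rightarrow> (nat \<times> bool) list \<Rightarrow> bool" where
  "positive_burau_eigenvalues N w \<longleftrightarrow>
     (\<exists>k::nat. k \<ge> 1 \<and> (\<exists>as :: real fls list.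
        char_poly (burau_word (fls_X ^ k) N w) = (\<Prod>a\<leftarrow>as. [:- a, 1:]) \<and>
        (\<forall>a \<in> set as. fls_pos a)))"

end

theory Submission imports Defs "HOL-Combinatorics.Cycles" begin

text \<open>The determinant of the Burau matrix is \<open>det \<rho>(\<beta>) = (-1)^\<ell> t^e\<close>, where \<open>\<ell>\<close> is the length
  and \<open>e\<close> the exponent sum of a word for \<open>\<beta>\<close>. The sign of the underlying permutation is
  \<open>(-1)^\<ell>\<close>, and a cycle of even length \<open>2n\<close> is odd, so \<open>\<ell>\<close> is odd and \<open>det \<rho>(\<beta>) = -t^e\<close>
  is negative. On the other hand the determinant is the product of the eigenvalues, which is
  positive if all eigenvalues are.\<close>

lemma fls_pos_one: "fls_pos 1"
  by (simp add: fls_pos_def)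

lemma fls_pos_mult: "fls_pos a \<Longrightarrow> fls_pos b \<Longrightarrow> fls_pos (a * b)"
  by (simp add: fls_pos_def fls_times_nth(4))

lemma fls_pos_inverse: "fls_pos a \<Longrightarrow> fls_pos (inverse a)"
  by (simp add: fls_pos_def fls_inverse_base)

lemma fls_pos_power: "fls_pos a \<Longrightarrow> fls_pos (a ^ n)"
  by (induction n) (simp_all add: fls_pos_one fls_pos_mult)

lemma fls_pos_power_int: "fls_pos a \<Longrightarrow> fls_pos (a powi n)"
  by (simp add: power_int_def fls_pos_power fls_pos_inverse)

lemma fls_pos_prod_list: "(\<And>a. a \<in> set as \<Longrightarrow> fls_pos a) \<Longrightarrow> fls_pos (prod_list as)"
  by (induction as) (simp_all add: fls_pos_one fls_pos_mult)

lemma fls_pos_X: "fls_pos fls_X"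
  by (simp add: fls_pos_def)

lemma not_fls_pos_uminus: "fls_pos a \<Longrightarrow> \<not> fls_pos (- a)"
  by (simp add: fls_pos_def)

lemma sign_cycle_of_list: "distinct cs \<Longrightarrow> sign (cycle_of_list cs) = (-1) ^ (length cs - 1)"
proof (induction cs rule: cycle_of_list.induct)
  case (1 i j cs)
  then have "i \<noteq> j" by auto
  have "sign (cycle_of_list (i # j # cs)) = sign (transpose i j) * sign (cycle_of_list (j # cs))"
    unfolding cycle_of_list.simps(1) by (rule sign_compose[OF permutation_swap_id permutation_of_cycle])
  with 1 \<open>i \<noteq> j\<close> show ?case by (simp del: cycle_of_list.simps add: sign_swap_id)
qed simp_all

lemma sign_cyclic_on:
  assumes p: "p permutes S" and "finite S" and cyc: "cyclic_on p S"
  shows "sign p = (-1) ^ (card S - 1)"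
proof -
  have perm: "permutation p" using p \<open>finite S\<close> by (rule permutes_imp_permutation[rotated])
  obtain a where "S = orbit p a" using cyc by (auto simp: cyclic_on_def)
  define cs where "cs = support p a"
  have set_cs: "set cs = S"
    unfolding cs_def support_set[OF perm] \<open>S = orbit p a\<close> orbit_altdef_permutation[OF perm] by auto
  have distinct_cs: "distinct cs" unfolding cs_def by (rule cycle_of_permutation[OF perm])
  have "p = cycle_of_list cs"
  proof
    fix x show "p x = cycle_of_list cs x"
    proof (cases "x \<in> set cs")
      case True then show ?thesis unfolding cs_def by (rule cycle_restrict[OF perm])
    next
      case False
      then show ?thesis using set_cs p by (simp add: permutes_not_in id_outside_supp)
    qed
  qed
  moreover have "length cs = card S" using distinct_card[OF distinct_cs] set_cs by simp
  ultimately show ?thesis using sign_cycle_of_list[OF distinct_cs] by simp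
qed

lemma braid_perm_Cons: "braid_perm ((i, s) # w) = transpose i (i + 1) \<circ> braid_perm w"
  by (simp add: braid_perm_def)

lemma braid_perm_permutes: "braid_word N w \<Longrightarrow> braid_perm w permutes {1..N}"
proof (induction w)
  case Nil
  have "braid_perm [] = id" by (simp add: braid_perm_def fun_eq_iff)
  then show ?case by (simp only: permutes_id)
next
  case (Cons a w)
  obtain i s where a: "a = (i, s)" by fastforce
  with Cons.prems have "braid_word N w" "1 \<le> i" "i < N" by (auto simp: braid_word_def)
  then show ?case unfolding a braid_perm_Cons
    by (intro permutes_compose[OF Cons.IH permutes_swap_id]) auto
qed

lemma sign_braid_perm:
  assumes "braid_word N w" shows "sign (braid_perm w) = (-1) ^ length w"
  using assms
proof (induction w)
  case Nil then show ?case by (simp add: braid_perm_def)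
next
  case (Cons a w)
  obtain i s where a: "a = (i, s)" by fastforce
  with Cons.prems have w: "braid_word N w" by (simp add: braid_word_def)
  have "permutation (braid_perm w)"
    using braid_perm_permutes[OF w] by (rule permutes_imp_permutation[rotated]) simp
  then have "sign (braid_perm (a # w)) = sign (transpose i (i + 1)) * sign (braid_perm w)"
    unfolding a braid_perm_Cons by (rule sign_compose[OF permutation_swap_id])
  then show ?case using Cons.IH[OF w] by (simp add: sign_swap_id)
qed

lemma even_length_iff_odd_strands_if_cyclic:
  assumes w: "braid_word N w" and cyc: "cyclic_on (braid_perm w) {1..N}"
  shows "even (length w) \<longleftrightarrow> odd N"
proof -
  have "N \<ge> 1" using cyc by (auto simp: cyclic_on_alldef)
  have "(-1 :: int) ^ length w = (-1) ^ (N - 1)"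
    using sign_braid_perm[OF w] sign_cyclic_on[OF braid_perm_permutes[OF w] _ cyc] by simp
  then have "even (length w) \<longleftrightarrow> even (N - 1)" by (simp add: minus_one_power_iff split: if_splits)
  with \<open>N \<ge> 1\<close> show ?thesis by (cases N) auto
qed

definition exponent_sum :: "(nat \<times> bool) list \<Rightarrow> int" where
  "exponent_sum w = (\<Sum>(i, s)\<leftarrow>w. if s then 1 else -1)"

lemma det_identity_except_column:
  fixes A :: "'a::comm_ring_1 mat"
  assumes A: "A \<in> carrier_mat n n" and c: "c < n"
    and cols: "\<And>r j. r < n \<Longrightarrow> j < n \<Longrightarrow> j \<noteq> c \<Longrightarrow> A $$ (r, j) = (if r = j then 1 else 0)"
  shows "det A = A $$ (c, c)"
proof -
  have "det A = (\<Sum>j<n. A $$ (c, j) * cofactor A c j)" by (rule laplace_expansion_row[OF A c])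
  also have "\<dots> = A $$ (c, c) * cofactor A c c"
    by (subst sum.mono_neutral_right[of "{..<n}" "{c}"]) (use c cols in auto)
  also have "mat_delete A c c = 1\<^sub>m (n - 1)"
    by (rule eq_matI) (use A cols c in \<open>auto simp: mat_delete_def\<close>)
  then have "cofactor A c c = 1" unfolding cofactor_def by simp
  finally show ?thesis by simp
qed

lemma burau_gen_carrier: "burau_gen T N i s \<in> carrier_mat (N - 1) (N - 1)"
  by (simp add: burau_gen_def)

lemma det_burau_gen:
  assumes "1 \<le> i" "i < N"
  shows "det (burau_gen T N i s) = - (T powi (if s then 1 else -1))"
proof -
  have "det (burau_gen T N i s) = burau_gen T N i s $$ (i - 1, i - 1)"
    by (rule det_identity_except_column[OF burau_gen_carrier]) (use assms in \<open>auto simp: burau_gen_def\<close>)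
  also have "\<dots> = - (T powi (if s then 1 else -1))" using assms by (auto simp: burau_gen_def)
  finally show ?thesis .
qed

lemma burau_word_Cons: "burau_word T N ((i, s) # w) = burau_gen T N i s * burau_word T N w"
  by (simp add: burau_word_def)

lemma burau_word_carrier: "burau_word T N w \<in> carrier_mat (N - 1) (N - 1)"
proof (induction w)
  case Nil then show ?case by (simp add: burau_word_def)
next
  case (Cons a w)
  obtain i s where a: "a = (i, s)" by fastforce
  show ?case unfolding a burau_word_Cons by (rule mult_carrier_mat[OF burau_gen_carrier Cons.IH])
qed

lemma det_burau_word:
  assumes "T \<noteq> 0" "braid_word N w"
  shows "det (burau_word T N w) = (-1) ^ length w * T powi exponent_sum w"
  using assms(2)
proof (induction w)
  case Nil then show ?case by (simp add: burau_word_def exponent_sum_def)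
next
  case (Cons a w)
  obtain i s where a: "a = (i, s)" by fastforce
  with Cons.prems have "braid_word N w" "1 \<le> i" "i < N" by (auto simp: braid_word_def)
  have "det (burau_word T N (a # w)) = det (burau_gen T N i s) * det (burau_word T N w)"
    unfolding a burau_word_Cons by (rule det_mult[OF burau_gen_carrier burau_word_carrier])
  also have "\<dots> = - (T powi (if s then 1 else -1)) * ((-1) ^ length w * T powi exponent_sum w)"
    by (simp only: Cons.IH[OF \<open>braid_word N w\<close>] det_burau_gen[OF \<open>1 \<le> i\<close> \<open>i < N\<close>])
  also have "\<dots> = (-1) ^ length (a # w) * T powi exponent_sum (a # w)"
    using \<open>T \<noteq> 0\<close> by (simp add: a exponent_sum_def power_int_add)
  finally show ?case .
qed

lemma det_eq_prod_list_if_char_poly_splits: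
  fixes A :: "'a::field mat"
  assumes A: "A \<in> carrier_mat n n" and split: "char_poly A = (\<Prod>a\<leftarrow>as. [:- a, 1:])"
  shows "det A = prod_list as"
proof -
  have "degree (\<Prod>a\<leftarrow>as. [:- a, 1:]) = length as"
    by (induction as) (auto simp: degree_mult_eq prod_list_zero_iff image_iff simp del: mult_pCons_left)
  then have "length as = n" using degree_monic_char_poly[OF A] split by simp
  have "poly (\<Prod>a\<leftarrow>as. [:- a, 1:]) 0 = (-1) ^ length as * prod_list as"
    by (induction as) auto
  then have "(-1) ^ n * prod_list as = poly (char_poly A) 0" using split \<open>length as = n\<close> by simp
  also have "poly (char_poly A) 0 = det (- char_matrix A 0)" by (rule char_poly_matrix[OF A])
  also have "- char_matrix A 0 = (-1) \<cdot>\<^sub>m A"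
    by (rule eq_matI) (use A in \<open>auto simp: char_matrix_def\<close>)
  also have "det ((-1) \<cdot>\<^sub>m A) = (-1) ^ n * det A" using A by simp
  finally show ?thesis by simp
qed

theorem mainTheorem14:
  fixes n :: nat and w :: "(nat \<times> bool) list"
  assumes "n \<ge> 1"
    and "braid_word (2 * n) w"
    and "cyclic_on (braid_perm w) {1..2 * n}"
  shows "\<not> positive_burau_eigenvalues (2 * n) w"
proof
  assume "positive_burau_eigenvalues (2 * n) w"
  then obtain k and as :: "real fls list" where
    split: "char_poly (burau_word (fls_X ^ k) (2 * n) w) = (\<Prod>a\<leftarrow>as. [:- a, 1:])"
    and pos: "\<forall>a \<in> set as. fls_pos a"
    unfolding positive_burau_eigenvalues_def by blast
  define T :: "real fls" where "T = fls_X ^ k"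
  have "odd (length w)" using even_length_iff_odd_strands_if_cyclic[OF assms(2,3)] by simp
  then have det_negative: "det (burau_word T (2 * n) w) = - (T powi exponent_sum w)"
    by (simp add: det_burau_word[OF _ assms(2)] T_def)
  have "det (burau_word T (2 * n) w) = prod_list as"
    unfolding T_def by (rule det_eq_prod_list_if_char_poly_splits[OF burau_word_carrier split])
  with pos have "fls_pos (det (burau_word T (2 * n) w))" by (simp add: fls_pos_prod_list)
  moreover have "fls_pos (T powi exponent_sum w)"
    unfolding T_def by (intro fls_pos_power_int fls_pos_power fls_pos_X)
  ultimately show False using det_negative not_fls_pos_uminus by metis
qed

end
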